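(* Let $Y$ be a solid vector space and $(X,d)$ a cone metric space over $Y$. Suppose $(x_n)_{n\ge0}$ is a sequence in $X$ with $d(x_n,x_m)\preceq b_n$ for all $n,m\ge0$ with $m\ge n$, where $(b_n)$ is a sequence in $Y$ with $b_n\to0$. Then: (i) $(x_n)$ is a Cauchy sequence in $X$; (ii) if $(x_n)$ converges to a point $x\in X$, then $d(x_n,x)\preceq b_n$ for all $n\ge0$.
   Context: Vector space with convergence: a real vector space $Y$ with a relation $\to$ between sequences in $Y$ and points of $Y$ (uniqueness of limits not assumed) such that (C1) $x_n\to x$, $y_n\to y$ imply $x_n+y_n\to x+y$; (C2) $x_n\to x$, $\lambda\in\mathbb R$ imply $\lambda x_n\to\lambda x$; (C3) $\lambda_n\to\lambda$ in $\mathbb R$ imply $\lambda_n x\to\lambda x$. $A\subseteq Y$ is open if $x_n\to x\in A$ implies $x_n\in A$ for all but finitely many $n$; closed if $x_n\to x$, $x_n\in A$ $\forall n$ imply $x\in A$; $A^\circ$ is the union of all open subsets of $A$. A cone is a nonempty closed $K$ with $\lambda K\subseteq K$ ($\lambda\ge0$), $K+K\subseteq K$, $K\cap(-K)=\{0\}$; solid if $K\ne\{0\}$, $K^\circ\ne\emptyset$. A vector ordering is a partial order $\preceq$ with (V1) $x\preceq y\Rightarrow x+z\preceq y+z$; (V2) $\lambda\ge0$, $x\preceq y\Rightarrow\lambda x\preceq\lambda y$; (V3) $x_n\to x$, $y_n\to y$, $x_n\preceq y_n$ $\forall n\Rightarrow x\preceq y$. Solid vector space: positive cone $K=\{x:x\succeq0\}$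 solid, with $x\prec y$ iff $y-x\in K^\circ$. Cone metric space over $Y$: nonempty $X$ with $d\colon X\times X\to Y$, $d(x,y)\succeq0$, $d(x,y)=0$ iff $x=y$, $d(x,y)=d(y,x)$, $d(x,y)\preceq d(x,z)+d(z,y)$. Convergence in $X$: $x_n\to x$ iff for every $c\succ0$, $d(x_n,x)\prec c$ for all but finitely many $n$. Cauchy: for every $c\succ0$ there is $N$ with $d(x_n,x_m)\prec c$ for all $n,m>N$. *)

theory Defs
  imports Complex_Main
begin

text \<open>A vector space with convergence: a real vector space together with a relation
  conv between sequences and points (uniqueness of limits not assumed).\<close>

definition vs_convergence :: "((nat \<Rightarrow> 'a::real_vector) \<Rightarrow> 'a \<Rightarrow> bool) \<Rightarrow> bool" where
  "vs_convergence conv \<longleftrightarrow>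
     (\<forall>xs x ys y. conv xs x \<and> conv ys y \<longrightarrow> conv (\<lambda>n. xs n + ys n) (x + y)) \<and>
     (\<forall>xs x (l::real). conv xs x \<longrightarrow> conv (\<lambda>n. l *\<^sub>R xs n) (l *\<^sub>R x)) \<and>
     (\<forall>(ls::nat \<Rightarrow> real) l x. ls \<longlonglongrightarrow> l \<longrightarrow> conv (\<lambda>n. ls n *\<^sub>R x) (l *\<^sub>R x))"

definition open_conv :: "((nat \<Rightarrow> 'a) \<Rightarrow> 'a \<Rightarrow> bool) \<Rightarrow> 'a set \<Rightarrow> bool" where
  "open_conv conv A \<longleftrightarrow>
     (\<forall>xs x. conv xs x \<and> x \<in> A \<longrightarrow> (\<forall>\<^sub>F n in sequentially. xs n \<in> A))"

definition closed_conv :: "((nat \<Rightarrow> 'a) \<Rightarrow> 'a \<Rightarrow> bool) \<Rightarrow> 'a set \<Rightarrow> bool" where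
  "closed_conv conv A \<longleftrightarrow> (\<forall>xs x. conv xs x \<and> (\<forall>n. xs n \<in> A) \<longrightarrow> x \<in> A)"

definition interior_conv :: "((nat \<Rightarrow> 'a) \<Rightarrow> 'a \<Rightarrow> bool) \<Rightarrow> 'a set \<Rightarrow> 'a set" where
  "interior_conv conv A = \<Union>{U. U \<subseteq> A \<and> open_conv conv U}"

definition is_cone :: "((nat \<Rightarrow> 'a::real_vector) \<Rightarrow> 'a \<Rightarrow> bool) \<Rightarrow> 'a set \<Rightarrow> bool" where
  "is_cone conv K \<longleftrightarrow> K \<noteq> {} \<and> closed_conv conv K \<and>
     (\<forall>(l::real) x. l \<ge> 0 \<and> x \<in> K \<longrightarrow> l *\<^sub>R x \<in> K) \<and>
     (\<forall>x y. x \<in> K \<and> y \<in> K \<longrightarrow> x + y \<in> K) \<and>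
     K \<inter> uminus ` K = {0}"

definition solid_cone :: "((nat \<Rightarrow> 'a::real_vector) \<Rightarrow> 'a \<Rightarrow> bool) \<Rightarrow> 'a set \<Rightarrow> bool" where
  "solid_cone conv K \<longleftrightarrow> is_cone conv K \<and> K \<noteq> {0} \<and> interior_conv conv K \<noteq> {}"

definition vector_ordering ::
  "((nat \<Rightarrow> 'a::real_vector) \<Rightarrow> 'a \<Rightarrow> bool) \<Rightarrow> ('a \<Rightarrow> 'a \<Rightarrow> bool) \<Rightarrow> bool" where
  "vector_ordering conv le \<longleftrightarrow>
     (\<forall>x. le x x) \<and> (\<forall>x y. le x y \<and> le y x \<longrightarrow> x = y) \<and>
     (\<forall>x y z. le x y \<and> le y z \<longrightarrow> le x z) \<and>
     (\<forall>x y z. le x y \<longrightarrow> le (x + z) (y + z)) \<and>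
     (\<forall>(l::real) x y. l \<ge> 0 \<and> le x y \<longrightarrow> le (l *\<^sub>R x) (l *\<^sub>R y)) \<and>
     (\<forall>xs x ys y. conv xs x \<and> conv ys y \<and> (\<forall>n. le (xs n) (ys n)) \<longrightarrow> le x y)"

definition pos_cone :: "('a::real_vector \<Rightarrow> 'a \<Rightarrow> bool) \<Rightarrow> 'a set" where
  "pos_cone le = {x. le 0 x}"

definition solid_vector_space ::
  "((nat \<Rightarrow> 'a::real_vector) \<Rightarrow> 'a \<Rightarrow> bool) \<Rightarrow> ('a \<Rightarrow> 'a \<Rightarrow> bool) \<Rightarrow> bool" where
  "solid_vector_space conv le \<longleftrightarrow> vs_convergence conv \<and> vector_ordering conv le \<and>
     solid_cone conv (pos_cone le)"

definition sless ::
  "((nat \<Rightarrow> 'a::real_vector) \<Rightarrow> 'a \<Rightarrow> bool) \<Rightarrow> ('a \<Rightarrow> 'a \<Rightarrow> bool) \<Rightarrow> 'a \<Rightarrow> 'a \<Rightarrow> bool" where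
  "sless conv le x y \<longleftrightarrow> y - x \<in> interior_conv conv (pos_cone le)"

definition cone_metric ::
  "('a::real_vector \<Rightarrow> 'a \<Rightarrow> bool) \<Rightarrow> 'b set \<Rightarrow> ('b \<Rightarrow> 'b \<Rightarrow> 'a) \<Rightarrow> bool" where
  "cone_metric le X d \<longleftrightarrow> X \<noteq> {} \<and>
     (\<forall>x\<in>X. \<forall>y\<in>X. le 0 (d x y)) \<and>
     (\<forall>x\<in>X. \<forall>y\<in>X. d x y = 0 \<longleftrightarrow> x = y) \<and>
     (\<forall>x\<in>X. \<forall>y\<in>X. d x y = d y x) \<and>
     (\<forall>x\<in>X. \<forall>y\<in>X. \<forall>z\<in>X. le (d x y) (d x z + d z y))"

definition cm_tendsto ::
  "((nat \<Rightarrow> 'a::real_vector) \<Rightarrow> 'a \<Rightarrow> bool) \<Rightarrow> ('a \<Rightarrow> 'a \<Rightarrow> bool) \<Rightarrow> ('b \<Rightarrow> 'b \<Rightarrow> 'a)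
     \<Rightarrow> (nat \<Rightarrow> 'b) \<Rightarrow> 'b \<Rightarrow> bool" where
  "cm_tendsto conv le d xs x \<longleftrightarrow>
     (\<forall>c. sless conv le 0 c \<longrightarrow> (\<forall>\<^sub>F n in sequentially. sless conv le (d (xs n) x) c))"

definition cm_cauchy ::
  "((nat \<Rightarrow> 'a::real_vector) \<Rightarrow> 'a \<Rightarrow> bool) \<Rightarrow> ('a \<Rightarrow> 'a \<Rightarrow> bool) \<Rightarrow> ('b \<Rightarrow> 'b \<Rightarrow> 'a)
     \<Rightarrow> (nat \<Rightarrow> 'b) \<Rightarrow> bool" where
  "cm_cauchy conv le d xs \<longleftrightarrow>
     (\<forall>c. sless conv le 0 c \<longrightarrow> (\<exists>N. \<forall>n m. n > N \<and> m > N \<longrightarrow> sless conv le (d (xs n) (xs m)) c))"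

end

theory Submission
  imports Defs
begin

text \<open>If \<open>b\<^sub>n \<rightarrow> 0\<close> and \<open>0 \<prec> c\<close>, then \<open>c - b\<^sub>n \<rightarrow> c\<close> lies in an open subset of the positive cone
  \<open>K\<close> for large \<open>n\<close>, so \<open>b\<^sub>n \<prec> c\<close> eventually; as \<open>int K + K \<subseteq> int K\<close>, \<open>d(x\<^sub>n, x\<^sub>m) \<preceq> b\<^sub>n \<prec> c\<close>
  gives the Cauchy property. If \<open>x\<^sub>n \<rightarrow> x\<close>, then for every \<open>c \<succ> 0\<close> choosing \<open>m \<ge> n\<close> large gives
  \<open>d(x\<^sub>n, x) \<preceq> d(x\<^sub>n, x\<^sub>m) + d(x\<^sub>m, x) \<preceq> b\<^sub>n + c\<close>. Taking \<open>c = e/k\<close> for a fixed interior point \<open>e\<close>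
  of \<open>K\<close> and letting \<open>k \<rightarrow> \<infinity>\<close>, the closedness of \<open>\<preceq>\<close> under limits yields \<open>d(x\<^sub>n, x) \<preceq> b\<^sub>n\<close>.\<close>

lemma interior_conv_iff:
  "x \<in> interior_conv conv A \<longleftrightarrow> (\<exists>U. open_conv conv U \<and> U \<subseteq> A \<and> x \<in> U)"
  unfolding interior_conv_def by blast

lemma vs_convergence_const:
  assumes "vs_convergence conv"
  shows "conv (\<lambda>n. c) c"
proof -
  have "conv (\<lambda>n. (\<lambda>n. 1::real) n *\<^sub>R c) (1 *\<^sub>R c)"
    using assms unfolding vs_convergence_def by blast
  then show ?thesis by simp
qed

lemma open_conv_translation:
  assumes vs: "vs_convergence conv" and U: "open_conv conv U"
  shows "open_conv conv ((\<lambda>y. y + k) ` U)"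
  unfolding open_conv_def
proof (intro allI impI)
  fix ys y assume h: "conv ys y \<and> y \<in> (\<lambda>y. y + k) ` U"
  have "conv (\<lambda>n. ys n + -k) (y + -k)"
    using vs h vs_convergence_const[OF vs, of "-k"] unfolding vs_convergence_def by blast
  moreover have "y + -k \<in> U" using h by auto
  ultimately have "\<forall>\<^sub>F n in sequentially. ys n + -k \<in> U"
    using U unfolding open_conv_def by blast
  then show "\<forall>\<^sub>F n in sequentially. ys n \<in> (\<lambda>y. y + k) ` U"
  proof (rule eventually_mono)
    fix n assume "ys n + -k \<in> U"
    moreover have "ys n = (ys n + -k) + k" by simp
    ultimately show "ys n \<in> (\<lambda>y. y + k) ` U" by blast
  qed
qed

lemma open_conv_scaleR:
  assumes vs: "vs_convergence conv" and U: "open_conv conv U" and l: "(l::real) > 0"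
  shows "open_conv conv ((\<lambda>y. l *\<^sub>R y) ` U)"
  unfolding open_conv_def
proof (intro allI impI)
  fix ys y assume h: "conv ys y \<and> y \<in> (\<lambda>y. l *\<^sub>R y) ` U"
  have "conv (\<lambda>n. (1/l) *\<^sub>R ys n) ((1/l) *\<^sub>R y)"
    using vs h unfolding vs_convergence_def by blast
  moreover have "(1/l) *\<^sub>R y \<in> U" using h l by auto
  ultimately have "\<forall>\<^sub>F n in sequentially. (1/l) *\<^sub>R ys n \<in> U"
    using U unfolding open_conv_def by blast
  then show "\<forall>\<^sub>F n in sequentially. ys n \<in> (\<lambda>y. l *\<^sub>R y) ` U"
  proof (rule eventually_mono)
    fix n assume "(1/l) *\<^sub>R ys n \<in> U"
    moreover have "ys n = l *\<^sub>R ((1/l) *\<^sub>R ys n)" using l by simp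
    ultimately show "ys n \<in> (\<lambda>y. l *\<^sub>R y) ` U" by blast
  qed
qed

lemma
  assumes "vector_ordering conv le"
  shows vector_ordering_trans: "le x y \<Longrightarrow> le y z \<Longrightarrow> le x z"
    and vector_ordering_add_right: "le x y \<Longrightarrow> le (x + z) (y + z)"
    and vector_ordering_scaleR: "(l::real) \<ge> 0 \<Longrightarrow> le x y \<Longrightarrow> le (l *\<^sub>R x) (l *\<^sub>R y)"
    and vector_ordering_limit: "conv xs x \<Longrightarrow> conv ys y \<Longrightarrow> (\<And>n. le (xs n) (ys n)) \<Longrightarrow> le x y"
  using assms unfolding vector_ordering_def by blast+

lemma vector_ordering_le_iff_diff:
  assumes "vector_ordering conv le"
  shows "le x y \<longleftrightarrow> le 0 (y - x)"
  using vector_ordering_add_right[OF assms, of x y "-x"]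
    vector_ordering_add_right[OF assms, of 0 "y - x" x] by auto

lemma sless_zero_imp_le:
  assumes "sless conv le 0 c"
  shows "le 0 c"
  using assms unfolding sless_def interior_conv_def pos_cone_def by auto

lemma interior_pos_cone_add:
  assumes vs: "vs_convergence conv" and vo: "vector_ordering conv le"
    and u: "u \<in> interior_conv conv (pos_cone le)" and k: "le 0 k"
  shows "u + k \<in> interior_conv conv (pos_cone le)"
proof -
  obtain U where U: "open_conv conv U" "U \<subseteq> pos_cone le" "u \<in> U"
    using u unfolding interior_conv_iff by blast
  have "(\<lambda>y. y + k) ` U \<subseteq> pos_cone le"
  proof
    fix z assume "z \<in> (\<lambda>y. y + k) ` U"
    then obtain y where y: "y \<in> U" "z = y + k" by blast
    have "le 0 y" using y(1) U(2) unfolding pos_cone_def by blast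
    then have "le k (y + k)" using vector_ordering_add_right[OF vo, of 0 y k] by simp
    then show "z \<in> pos_cone le"
      using vector_ordering_trans[OF vo k] y(2) unfolding pos_cone_def by simp
  qed
  then show ?thesis
    using open_conv_translation[OF vs U(1)] U(3) unfolding interior_conv_iff by blast
qed

lemma le_sless_trans:
  assumes vs: "vs_convergence conv" and vo: "vector_ordering conv le"
    and "le a b" and "sless conv le b c"
  shows "sless conv le a c"
proof -
  have "le 0 (b - a)" using \<open>le a b\<close> vector_ordering_le_iff_diff[OF vo] by blast
  with interior_pos_cone_add[OF vs vo] \<open>sless conv le b c\<close> have
    "(c - b) + (b - a) \<in> interior_conv conv (pos_cone le)"
    unfolding sless_def by blast
  then show ?thesis unfolding sless_def by simp
qed

lemma sless_zero_scaleR: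
  assumes vs: "vs_convergence conv" and vo: "vector_ordering conv le"
    and e: "sless conv le 0 e" and l: "(l::real) > 0"
  shows "sless conv le 0 (l *\<^sub>R e)"
proof -
  obtain U where U: "open_conv conv U" "U \<subseteq> pos_cone le" "e \<in> U"
    using e unfolding sless_def interior_conv_iff by auto
  have "(\<lambda>y. l *\<^sub>R y) ` U \<subseteq> pos_cone le"
  proof
    fix z assume "z \<in> (\<lambda>y. l *\<^sub>R y) ` U"
    then obtain y where y: "y \<in> U" "z = l *\<^sub>R y" by blast
    have "le 0 y" using y U unfolding pos_cone_def by auto
    then have "le (l *\<^sub>R 0) (l *\<^sub>R y)" using vector_ordering_scaleR[OF vo, of l 0 y] l by simp
    then show "z \<in> pos_cone le" using y unfolding pos_cone_def by simp
  qed
  then show ?thesis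
    using open_conv_scaleR[OF vs U(1) l] U(3) unfolding sless_def interior_conv_iff by auto
qed

lemma eventually_sless_of_conv_zero:
  assumes vs: "vs_convergence conv" and b: "conv b 0" and c: "sless conv le 0 c"
  shows "\<forall>\<^sub>F n in sequentially. sless conv le (b n) c"
proof -
  obtain U where U: "open_conv conv U" "U \<subseteq> pos_cone le" "c \<in> U"
    using c unfolding sless_def interior_conv_iff by auto
  have "conv (\<lambda>n. (-1::real) *\<^sub>R b n) ((-1::real) *\<^sub>R 0)"
    using vs b unfolding vs_convergence_def by blast
  then have "conv (\<lambda>n. c + (-1::real) *\<^sub>R b n) (c + (-1::real) *\<^sub>R 0)"
    using vs vs_convergence_const[OF vs, of c] unfolding vs_convergence_def by blast
  then have "conv (\<lambda>n. c - b n) c" by simp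
  then have "\<forall>\<^sub>F n in sequentially. c - b n \<in> U"
    using U unfolding open_conv_def by blast
  then show ?thesis
    by (rule eventually_mono) (use U in \<open>auto simp: sless_def interior_conv_iff\<close>)
qed

lemma solid_vector_space_le_of_le_add_sless:
  assumes S: "solid_vector_space conv le"
    and bound: "\<And>c. sless conv le 0 c \<Longrightarrow> le a (b + c)"
  shows "le a b"
proof -
  have vs: "vs_convergence conv" and vo: "vector_ordering conv le"
    using S unfolding solid_vector_space_def by blast+
  obtain e where e: "sless conv le 0 e"
    using S unfolding solid_vector_space_def solid_cone_def sless_def by auto
  have le_approx: "le a (b + (1 / real (Suc k)) *\<^sub>R e)" for k
    by (rule bound, rule sless_zero_scaleR[OF vs vo e]) simp
  have approx: "conv (\<lambda>k. b + (1 / real (Suc k)) *\<^sub>R e) (b + 0 *\<^sub>R e)"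
    using vs vs_convergence_const[OF vs, of b]
      LIMSEQ_inverse_real_of_nat[unfolded inverse_eq_divide]
    unfolding vs_convergence_def by blast
  have "le a (b + 0 *\<^sub>R e)"
    by (rule vector_ordering_limit[OF vo vs_convergence_const[OF vs, of a] approx le_approx])
  then show ?thesis by simp
qed

lemma cm_cauchy_of_dist_bound:
  assumes vs: "vs_convergence conv" and vo: "vector_ordering conv le"
    and "cone_metric le X d" and "\<forall>n. xs n \<in> X"
    and bound: "\<forall>n m. n \<le> m \<longrightarrow> le (d (xs n) (xs m)) (b n)"
    and "conv b 0"
  shows "cm_cauchy conv le d xs"
  unfolding cm_cauchy_def
proof (intro allI impI)
  fix c assume c: "sless conv le 0 c"
  obtain N where N: "\<And>n. n \<ge> N \<Longrightarrow> sless conv le (b n) c"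
    using eventually_sless_of_conv_zero[OF vs \<open>conv b 0\<close> c]
    unfolding eventually_sequentially by blast
  have sym: "d (xs n) (xs m) = d (xs m) (xs n)" for n m
    using assms(3,4) unfolding cone_metric_def by simp
  have "sless conv le (d (xs n) (xs m)) c" if "n > N" "m > N" for n m
  proof (cases "n \<le> m")
    case True
    then show ?thesis using le_sless_trans[OF vs vo] bound N \<open>n > N\<close> by (meson less_imp_le)
  next
    case False
    then have "le (d (xs n) (xs m)) (b m)" using bound sym by simp
    then show ?thesis using le_sless_trans[OF vs vo] N \<open>m > N\<close> by (meson less_imp_le)
  qed
  then show "\<exists>N. \<forall>n m. N < n \<and> N < m \<longrightarrow> sless conv le (d (xs n) (xs m)) c" by blast
qed

lemma dist_limit_le_of_dist_bound:
  assumes S: "solid_vector_space conv le"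
    and CM: "cone_metric le X d" and X: "\<forall>n. xs n \<in> X" "x \<in> X"
    and bound: "\<forall>n m. n \<le> m \<longrightarrow> le (d (xs n) (xs m)) (b n)"
    and lim: "cm_tendsto conv le d xs x"
  shows "le (d (xs n) x) (b n)"
proof (rule solid_vector_space_le_of_le_add_sless[OF S])
  fix c assume c: "sless conv le 0 c"
  have vo: "vector_ordering conv le" using S unfolding solid_vector_space_def by blast
  note vector_ordering_trans[OF vo, trans]
  obtain M where M: "\<And>m. m \<ge> M \<Longrightarrow> sless conv le (d (xs m) x) c"
    using lim c unfolding cm_tendsto_def eventually_sequentially by blast
  define m where "m = max M n"
  have "le (d (xs n) x) (d (xs n) (xs m) + d (xs m) x)"
    using CM X unfolding cone_metric_def by blast
  also have "le \<dots> (b n + d (xs m) x)"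
    using vector_ordering_add_right[OF vo] bound m_def by simp
  also have "le \<dots> (b n + c)"
  proof -
    have "le 0 (c - d (xs m) x)"
      using sless_zero_imp_le[of conv le] M[of m] unfolding m_def sless_def by simp
    then have "le 0 ((b n + c) - (b n + d (xs m) x))" by (simp add: algebra_simps)
    then show ?thesis using vector_ordering_le_iff_diff[OF vo] by blast
  qed
  finally show "le (d (xs n) x) (b n + c)" .
qed

theorem theorem9p20:
  fixes conv :: "(nat \<Rightarrow> 'a::real_vector) \<Rightarrow> 'a \<Rightarrow> bool"
    and le :: "'a \<Rightarrow> 'a \<Rightarrow> bool"
    and X :: "'b set" and d :: "'b \<Rightarrow> 'b \<Rightarrow> 'a"
    and xs :: "nat \<Rightarrow> 'b" and b :: "nat \<Rightarrow> 'a"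
  assumes "solid_vector_space conv le"
    and "cone_metric le X d"
    and "\<forall>n. xs n \<in> X"
    and "\<forall>n m. n \<le> m \<longrightarrow> le (d (xs n) (xs m)) (b n)"
    and "conv b 0"
  shows "cm_cauchy conv le d xs \<and>
         (\<forall>x\<in>X. cm_tendsto conv le d xs x \<longrightarrow> (\<forall>n. le (d (xs n) x) (b n)))"
proof
  have "vs_convergence conv" and "vector_ordering conv le"
    using assms(1) unfolding solid_vector_space_def by blast+
  then show "cm_cauchy conv le d xs"
    using cm_cauchy_of_dist_bound assms(2-5) by blast
  show "\<forall>x\<in>X. cm_tendsto conv le d xs x \<longrightarrow> (\<forall>n. le (d (xs n) x) (b n))"
    using dist_limit_le_of_dist_bound[OF assms(1,2,3)] assms(4) by blast
qed

end
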